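(* Let $M>0$, $\beta^*>0$, and let $g$ be the log-normal density $g(t)=\frac{1}{t\sigma\sqrt{2\pi}}\exp\!\big(-\frac{(\ln t-\mu)^2}{2\sigma^2}\big)$ for $t>0$, $g(t)=0$ for $t\le0$ ($\mu\in\mathbb{R}$, $\sigma>0$). Let $I$ be the unique $C^1$ solution on $[0,\infty)$ of \[ I'(t)=\beta^*(M-I(t))\Big(I(t)-\int_0^t g(t-s)I(s)\,ds\Big),\qquad I(0)=I_0\in[0,M]. \] Then $\lim_{t\to\infty}I'(t)=0$. *)

theory Defs
  imports "HOL-Analysis.Analysis"
begin

definition lognormal_density :: "real \<Rightarrow> real \<Rightarrow> real \<Rightarrow> real" where
  "lognormal_density \<mu> \<sigma> t =
     (if t > 0 then 1 / (t * \<sigma> * sqrt (2 * pi)) * exp (- ((ln t - \<mu>)^2) / (2 * \<sigma>^2))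
      else 0)"

end

theory Submission
  imports Defs "HOL-Probability.Distributions" "HOL-Real_Asymp.Real_Asymp"
begin

text \<open>Since \<open>g \<ge> 0\<close> has mass \<open>G t < 1\<close> on every \<open>[0, t]\<close>, the memory term stays below
  \<open>I t\<close> as long as \<open>I\<close> is nondecreasing on \<open>[0, t]\<close>. So \<open>I'\<close> can only reach \<open>0\<close> at a time
  where \<open>I = M\<close>, and a Gronwall-type uniqueness argument keeps \<open>I = M\<close> from then on
  (likewise \<open>I = 0\<close> throughout if \<open>I 0 = 0\<close>). Hence \<open>I\<close> is nondecreasing and bounded by \<open>M\<close>,
  so it converges to some \<open>L\<close>; the memory term is squeezed between \<open>I (t/2) * G (t/2)\<close> and
  \<open>I t * G t\<close>, so it converges as well, and therefore so does \<open>I'\<close>. A convergent function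
  can only have limiting slope \<open>0\<close>.\<close>

section \<open>The lognormal density\<close>

lemma lognormal_density_nonneg: "\<sigma> > 0 \<Longrightarrow> 0 \<le> lognormal_density \<mu> \<sigma> t"
  by (simp add: lognormal_density_def)

lemma lognormal_density_le_mode:
  fixes \<mu> \<sigma> t :: real
  assumes "\<sigma> > 0"
  shows "lognormal_density \<mu> \<sigma> t \<le> lognormal_density \<mu> \<sigma> (exp (\<mu> - \<sigma>\<^sup>2))"
proof -
  have mode: "lognormal_density \<mu> \<sigma> (exp (\<mu> - \<sigma>\<^sup>2)) = exp (\<sigma>\<^sup>2 / 2 - \<mu>) / (\<sigma> * sqrt (2 * pi))"
    using assms by (simp add: lognormal_density_def power2_eq_square field_simps flip: exp_add exp_diff)
  have "lognormal_density \<mu> \<sigma> t \<le> exp (\<sigma>\<^sup>2 / 2 - \<mu>) / (\<sigma> * sqrt (2 * pi))"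
  proof (cases "t > 0")
    case True
    \<comment> \<open>complete the square in the exponent\<close>
    have "- ((ln t - \<mu>)\<^sup>2) / (2 * \<sigma>\<^sup>2) = ln t + (\<sigma>\<^sup>2 / 2 - \<mu>) - (ln t - \<mu> + \<sigma>\<^sup>2)\<^sup>2 / (2 * \<sigma>\<^sup>2)"
      using assms by (simp add: field_simps power2_eq_square)
    then have "exp (- ((ln t - \<mu>)\<^sup>2) / (2 * \<sigma>\<^sup>2)) \<le> exp (ln t + (\<sigma>\<^sup>2 / 2 - \<mu>))"
      by simp
    also have "\<dots> = t * exp (\<sigma>\<^sup>2 / 2 - \<mu>)"
      using True by (simp add: exp_add)
    finally show ?thesis
      using True assms by (simp add: lognormal_density_def field_simps)
  next
    case False
    then show ?thesis using assms by (simp add: lognormal_density_def)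
  qed
  then show ?thesis by (simp only: mode)
qed

lemma continuous_on_lognormal_density:
  fixes \<mu> \<sigma> :: real
  assumes "\<sigma> > 0"
  shows "continuous_on A (lognormal_density \<mu> \<sigma>)"
proof -
  let ?h = "\<lambda>t. 1 / (t * \<sigma> * sqrt (2 * pi)) * exp (- ((ln t - \<mu>)\<^sup>2) / (2 * \<sigma>\<^sup>2))"
  have pos: "isCont (lognormal_density \<mu> \<sigma>) x" if "x > 0" for x
  proof -
    have "continuous_on {0<..} ?h"
      using assms by (intro continuous_intros) auto
    then have "continuous_on {0<..} (lognormal_density \<mu> \<sigma>)"
      by (rule continuous_on_cong[THEN iffD1, rotated 2]) (auto simp: lognormal_density_def)
    then show ?thesis
      using that by (simp add: continuous_on_eq_continuous_at)
  qed
  have neg: "isCont (lognormal_density \<mu> \<sigma>) x" if "x < 0" for x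
  proof -
    have "continuous_on {..<0} (\<lambda>_. 0 :: real)"
      by simp
    then have "continuous_on {..<0} (lognormal_density \<mu> \<sigma>)"
      by (rule continuous_on_cong[THEN iffD1, rotated 2]) (auto simp: lognormal_density_def)
    then show ?thesis
      using that by (simp add: continuous_on_eq_continuous_at)
  qed
  have "\<forall>\<^sub>F t in at_right 0. ?h t = lognormal_density \<mu> \<sigma> t"
    by (rule eventually_mono[OF eventually_at_right_less]) (simp add: lognormal_density_def)
  moreover have "(?h \<longlongrightarrow> 0) (at_right 0)"
    using assms by real_asymp
  ultimately have "(lognormal_density \<mu> \<sigma> \<longlongrightarrow> 0) (at_right 0)"
    by (rule tendsto_cong[THEN iffD1])
  moreover have "\<forall>\<^sub>F t in at_left 0. lognormal_density \<mu> \<sigma> t = 0"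
    using eventually_at_left_real[of "-1" 0]
    by (rule eventually_mono) (auto simp: lognormal_density_def)
  then have "(lognormal_density \<mu> \<sigma> \<longlongrightarrow> 0) (at_left 0)"
    by (rule tendsto_eventually)
  ultimately have "isCont (lognormal_density \<mu> \<sigma>) 0"
    by (simp add: isCont_def filterlim_split_at lognormal_density_def)
  then show ?thesis
    using pos neg by (metis continuous_at_imp_continuous_on linorder_neqE_linordered_idom)
qed

lemma exp_mult_lognormal_density:
  "\<sigma> > 0 \<Longrightarrow> exp u * lognormal_density \<mu> \<sigma> (exp u) = normal_density \<mu> \<sigma> u"
  by (simp add: lognormal_density_def normal_density_def real_sqrt_mult field_simps)

lemma continuous_on_normal_density: "\<sigma> > 0 \<Longrightarrow> continuous_on A (normal_density \<mu> \<sigma>)"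
  unfolding normal_density_def by (intro continuous_intros) auto

lemma integral_normal_density_le_1:
  assumes "\<sigma> > 0"
  shows "integral {a..b} (normal_density \<mu> \<sigma>) \<le> 1"
proof -
  have total: "(normal_density \<mu> \<sigma> has_integral 1) UNIV"
    using has_integral_integral_lborel[OF integrable_normal_density] assms by simp
  have "integral {a..b} (normal_density \<mu> \<sigma>) \<le> integral UNIV (normal_density \<mu> \<sigma>)"
    using total integrable_continuous_interval[OF continuous_on_normal_density[OF assms]]
    by (intro integral_subset_le) (auto simp: normal_density_nonneg assms)
  also have "\<dots> = 1"
    using total by (rule integral_unique)
  finally show ?thesis .
qed

lemma integral_normal_density_pos:
  assumes "\<sigma> > 0" "a < b"
  shows "integral {a..b} (normal_density \<mu> \<sigma>) > 0"
proof -
  obtain x where x: "x \<in> {a..b}" and min: "\<And>y. y \<in> {a..b} \<Longrightarrow> normal_density \<mu> \<sigma> x \<le> normal_density \<mu> \<sigma> y"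
    using continuous_attains_inf[OF compact_Icc _ continuous_on_normal_density[OF assms(1), where \<mu> = \<mu>], of a b]
      assms(2) by auto
  have "0 < (b - a) * normal_density \<mu> \<sigma> x"
    using assms normal_density_pos by simp
  also have "\<dots> = integral {a..b} (\<lambda>_. normal_density \<mu> \<sigma> x)"
    using assms(2) by simp
  also have "\<dots> \<le> integral {a..b} (normal_density \<mu> \<sigma>)"
    using min integrable_continuous_interval[OF continuous_on_normal_density[OF assms(1)]]
    by (intro integral_le) auto
  finally show ?thesis .
qed

lemma integral_lognormal_density_eq_normal:
  assumes "\<sigma> > 0" "0 < a" "a \<le> b"
  shows "integral {a..b} (lognormal_density \<mu> \<sigma>) = integral {ln a..ln b} (normal_density \<mu> \<sigma>)"
proof -
  have "((\<lambda>u. exp u *\<^sub>R lognormal_density \<mu> \<sigma> (exp u)) has_integral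
          integral {exp (ln a)..exp (ln b)} (lognormal_density \<mu> \<sigma>)) {ln a..ln b}"
  proof (rule has_integral_substitution[where c = a and d = b])
    have "exp (ln a) \<le> exp u \<and> exp u \<le> exp (ln b)" if "u \<in> {ln a..ln b}" for u
      using that by simp
    then show "exp ` {ln a..ln b} \<subseteq> {a..b}"
      using assms by auto
  qed (use assms continuous_on_lognormal_density in \<open>auto intro!: derivative_eq_intros\<close>)
  then show ?thesis
    using assms by (simp add: exp_mult_lognormal_density integral_unique)
qed

definition lognormal_cdf :: "real \<Rightarrow> real \<Rightarrow> real \<Rightarrow> real" where
  "lognormal_cdf \<mu> \<sigma> t = integral {0..t} (lognormal_density \<mu> \<sigma>)"

lemma lognormal_cdf_mono:
  assumes "\<sigma> > 0" "0 \<le> x" "x \<le> y"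
  shows "lognormal_cdf \<mu> \<sigma> x \<le> lognormal_cdf \<mu> \<sigma> y"
  unfolding lognormal_cdf_def
  using assms integrable_continuous_interval[OF continuous_on_lognormal_density[OF assms(1)]]
  by (intro integral_subset_le) (auto simp: lognormal_density_nonneg)

lemma lognormal_cdf_less_1:
  fixes \<mu> \<sigma> t :: real
  assumes "\<sigma> > 0"
  shows "lognormal_cdf \<mu> \<sigma> t < 1"
proof (cases "t > 0")
  case True
  let ?g = "lognormal_density \<mu> \<sigma>" and ?\<phi> = "normal_density \<mu> \<sigma>"
  let ?K = "?g (exp (\<mu> - \<sigma>\<^sup>2))"
  \<comment> \<open>the mass beyond \<open>t\<close> is at least \<open>e\<close>; the mass on \<open>[0, a]\<close> is at most \<open>?K * a \<le> e / 2\<close>\<close>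
  define e where "e = integral {ln t..ln t + 1} ?\<phi>"
  define a where "a = min t (e / (2 * ?K))"
  have e: "e > 0"
    unfolding e_def using assms by (intro integral_normal_density_pos) auto
  have K: "?K > 0"
    using assms by (simp add: lognormal_density_def)
  have a: "0 < a" "a \<le> t" "?K * a \<le> e / 2"
    using True e K by (auto simp: a_def min_def field_simps)
  have int_g: "?g integrable_on {x..y}" for x y
    using assms by (intro integrable_continuous_interval continuous_on_lognormal_density)
  have int_\<phi>: "?\<phi> integrable_on {x..y}" for x y
    using assms by (intro integrable_continuous_interval continuous_on_normal_density)
  have "integral {0..a} ?g \<le> ?K * a"
    using integral_bound[of 0 a ?g ?K] a continuous_on_lognormal_density[OF assms]
    by (simp add: assms lognormal_density_le_mode lognormal_density_nonneg abs_le_iff)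
  moreover have "integral {a..t} ?g = integral {ln a..ln t} ?\<phi>"
    using assms a by (intro integral_lognormal_density_eq_normal)
  moreover have "integral {ln a..ln t} ?\<phi> + e = integral {ln a..ln t + 1} ?\<phi>"
    unfolding e_def using a int_\<phi> by (intro Henstock_Kurzweil_Integration.integral_combine) auto
  moreover have "integral {ln a..ln t + 1} ?\<phi> \<le> 1"
    using assms by (rule integral_normal_density_le_1)
  moreover have "lognormal_cdf \<mu> \<sigma> t = integral {0..a} ?g + integral {a..t} ?g"
    unfolding lognormal_cdf_def using a int_g
    by (intro Henstock_Kurzweil_Integration.integral_combine[symmetric]) auto
  ultimately show ?thesis
    using a e by linarith
qed (cases "t = 0", auto simp: lognormal_cdf_def)

section \<open>Real analysis\<close>

lemma integral_reflect_shift_real: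
  fixes f :: "real \<Rightarrow> 'b::euclidean_space"
  shows "integral {a..b} (\<lambda>s. f (b - s)) = integral {0..b - a} f"
proof -
  have "integral {a..b} (\<lambda>s. f (b - s)) = integral {-b..-a} (\<lambda>x. f (x + b))"
    using Henstock_Kurzweil_Integration.integral_reflect_real[of "-a" "-b" "\<lambda>x. f (x + b)"] by simp
  also have "\<dots> = integral {0..b - a} f"
    using integral_shift_real_ivl[of 0 b "b - a" f] by simp
  finally show ?thesis .
qed

lemma mono_on_tendsto_at_top_SUP:
  fixes f :: "real \<Rightarrow> real"
  assumes mono: "mono_on {a..} f" and bdd: "bdd_above (f ` {a..})"
  shows "(f \<longlongrightarrow> (SUP x\<in>{a..}. f x)) at_top"
proof (rule order_tendstoI)
  fix y assume "y < (SUP x\<in>{a..}. f x)"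
  then obtain x0 where x0: "x0 \<ge> a" "y < f x0"
    using less_cSUP_iff[OF _ bdd] by auto
  have "y < f x" if "x \<ge> x0" for x
    using x0 mono_onD[OF mono, of x0 x] that by simp
  then show "\<forall>\<^sub>F x in at_top. y < f x"
    by (auto simp: eventually_at_top_linorder)
next
  fix y assume "(SUP x\<in>{a..}. f x) < y"
  then have "f x < y" if "x \<ge> a" for x
    using cSUP_upper[OF _ bdd, of x] that by simp
  then show "\<forall>\<^sub>F x in at_top. f x < y"
    by (auto simp: eventually_at_top_linorder)
qed

lemma tendsto_deriv_at_top_le_0:
  fixes f f' :: "real \<Rightarrow> real"
  assumes deriv: "\<forall>\<^sub>F x in at_top. (f has_real_derivative f' x) (at x)"
    and f': "(f' \<longlongrightarrow> A) at_top" and f: "(f \<longlongrightarrow> L) at_top"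
  shows "A \<le> 0"
proof (rule ccontr)
  assume "\<not> A \<le> 0"
  then have A: "A > 0" by simp
  have "\<forall>\<^sub>F x in at_top. \<bar>f x - L\<bar> < 1"
    using f by (auto simp: tendsto_iff dist_real_def)
  moreover have "\<forall>\<^sub>F x in at_top. A / 2 < f' x"
    using A by (intro order_tendstoD(1)[OF f']) simp
  ultimately have "\<forall>\<^sub>F x in at_top. (f has_real_derivative f' x) (at x) \<and> A / 2 < f' x \<and> \<bar>f x - L\<bar> < 1"
    using deriv by eventually_elim simp
  then obtain T where T: "\<And>x. x \<ge> T \<Longrightarrow>
      (f has_real_derivative f' x) (at x) \<and> A / 2 < f' x \<and> \<bar>f x - L\<bar> < 1"
    by (auto simp: eventually_at_top_linorder)
  \<comment> \<open>over a stretch of length \<open>4 / A\<close>, \<open>f\<close> rises by more than \<open>2\<close>\<close>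
  obtain z where z: "T < z" "z < T + 4 / A" and mvt: "f (T + 4 / A) - f T = 4 / A * f' z"
    using MVT2[of T "T + 4 / A" f f'] T A by auto
  have "4 / A * (A / 2) < 4 / A * f' z"
    using T[of z] z A by (intro mult_strict_left_mono) auto
  then have "f (T + 4 / A) - f T > 2"
    using A mvt by simp
  moreover have "\<bar>f (T + 4 / A) - L\<bar> < 1" "\<bar>f T - L\<bar> < 1"
    using T A by auto
  ultimately show False
    by linarith
qed

lemma tendsto_deriv_at_top_eq_0:
  fixes f f' :: "real \<Rightarrow> real"
  assumes deriv: "\<forall>\<^sub>F x in at_top. (f has_real_derivative f' x) (at x)"
    and f': "(f' \<longlongrightarrow> A) at_top" and f: "(f \<longlongrightarrow> L) at_top"
  shows "A = 0"
proof -
  have "A \<le> 0"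
    using deriv f' f by (rule tendsto_deriv_at_top_le_0)
  moreover have "- A \<le> 0"
    using deriv tendsto_minus[OF f'] tendsto_minus[OF f]
    by (intro tendsto_deriv_at_top_le_0[of "\<lambda>x. - f x" "\<lambda>x. - f' x"])
      (auto elim: eventually_mono intro: derivative_intros)
  ultimately show ?thesis
    by simp
qed

lemma deriv_bounded_by_past_extend_zero:
  fixes f f' :: "real \<Rightarrow> real"
  assumes deriv: "\<And>x. a \<le> x \<Longrightarrow> (f has_real_derivative f' x) (at x within {a..})"
    and zero: "\<forall>s\<in>{a..b}. f s = 0" and "a \<le> b" "b \<le> c"
    and bound: "\<And>x m. x \<in> {b..c} \<Longrightarrow> \<forall>s\<in>{a..x}. \<bar>f s\<bar> \<le> m \<Longrightarrow> \<bar>f' x\<bar> \<le> C * m"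
    and C: "0 \<le> C" "C * (c - b) < 1"
  shows "\<forall>s\<in>{a..c}. f s = 0"
proof -
  have "continuous_on {a..c} f"
    by (rule DERIV_continuous_on, rule has_field_derivative_subset[OF deriv]) auto
  then have "continuous_on {a..c} (\<lambda>s. \<bar>f s\<bar>)"
    by (intro continuous_intros)
  then obtain x0 where x0: "x0 \<in> {a..c}" and max: "\<And>s. s \<in> {a..c} \<Longrightarrow> \<bar>f s\<bar> \<le> \<bar>f x0\<bar>"
    using continuous_attains_sup[OF compact_Icc, of a c "\<lambda>s. \<bar>f s\<bar>"] \<open>a \<le> b\<close> \<open>b \<le> c\<close>
    by auto
  define m where "m = \<bar>f x0\<bar>"
  \<comment> \<open>on \<open>[b, x0]\<close> the derivative is at most \<open>C * m\<close>, which forces \<open>m \<le> C * (c - b) * m\<close>\<close>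
  have "m = 0"
  proof (cases "x0 \<le> b")
    case True
    then show ?thesis
      using zero x0 by (simp add: m_def)
  next
    case False
    have "norm (f x0 - f b) \<le> C * m * norm (x0 - b)"
    proof (rule field_differentiable_bound[where S = "{b..x0}"])
      show "(f has_field_derivative f' x) (at x within {b..x0})" if "x \<in> {b..x0}" for x
        using deriv[of x] that \<open>a \<le> b\<close> by (auto intro: has_field_derivative_subset)
      show "norm (f' x) \<le> C * m" if "x \<in> {b..x0}" for x
        using that x0 max by (auto intro!: bound simp: m_def)
    qed (use False in auto)
    also have "\<dots> \<le> C * m * (c - b)"
      using False x0 C by (intro mult_left_mono) (auto simp: m_def)
    finally have "m * (1 - C * (c - b)) \<le> 0"
      using zero \<open>a \<le> b\<close> by (simp add: m_def algebra_simps)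
    then show ?thesis
      using C by (simp add: m_def mult_le_0_iff)
  qed
  then show ?thesis
    using max by (fastforce simp: m_def)
qed

lemma deriv_bounded_by_past_imp_eq_0:
  fixes f f' :: "real \<Rightarrow> real"
  assumes deriv: "\<And>x. a \<le> x \<Longrightarrow> (f has_real_derivative f' x) (at x within {a..})"
    and "f a = 0"
    and bound: "\<And>T. \<exists>C\<ge>0. \<forall>x m. x \<in> {a..T} \<longrightarrow> (\<forall>s\<in>{a..x}. \<bar>f s\<bar> \<le> m) \<longrightarrow> \<bar>f' x\<bar> \<le> C * m"
    and "a \<le> t"
  shows "f t = 0"
proof -
  obtain C where C: "C \<ge> 0"
    and bound_t: "\<And>x m. x \<in> {a..t} \<Longrightarrow> \<forall>s\<in>{a..x}. \<bar>f s\<bar> \<le> m \<Longrightarrow> \<bar>f' x\<bar> \<le> C * m"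
    using bound[of t] by blast
  define \<delta> where "\<delta> = 1 / (C + 1)"
  have \<delta>: "\<delta> > 0" "C * \<delta> < 1"
    using C by (auto simp: \<delta>_def field_simps)
  have "\<forall>s\<in>{a..min t (a + real k * \<delta>)}. f s = 0" for k
  proof (induction k)
    case 0
    then show ?case
      using \<open>f a = 0\<close> by auto
  next
    case (Suc k)
    let ?b = "min t (a + real k * \<delta>)" and ?c = "min t (a + real (Suc k) * \<delta>)"
    have "0 \<le> real k * \<delta>"
      using \<delta> by simp
    then have "a \<le> ?b"
      using \<open>a \<le> t\<close> by simp
    show ?case
    proof (rule deriv_bounded_by_past_extend_zero[OF deriv Suc.IH \<open>a \<le> ?b\<close>])
      show "?b \<le> ?c"
        using \<delta> by (auto simp: algebra_simps min_def)
      show "\<bar>f' x\<bar> \<le> C * m" if "x \<in> {?b..?c}" "\<forall>s\<in>{a..x}. \<bar>f s\<bar> \<le> m" for x m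
        using that \<open>a \<le> ?b\<close> by (intro bound_t) auto
      have "C * (?c - ?b) \<le> C * \<delta>"
        using C \<delta> by (intro mult_left_mono) (auto simp: algebra_simps)
      then show "C * (?c - ?b) < 1"
        using \<delta> by linarith
    qed (use C in auto)
  qed
  moreover have "min t (a + real (nat \<lceil>(t - a) / \<delta>\<rceil>) * \<delta>) = t"
  proof -
    have "(t - a) / \<delta> \<le> real (nat \<lceil>(t - a) / \<delta>\<rceil>)"
      by linarith
    then show ?thesis
      using \<delta> by (simp add: pos_divide_le_eq)
  qed
  ultimately show ?thesis
    using \<open>a \<le> t\<close> by (metis atLeastAtMost_iff order_refl)
qed

section \<open>The epidemic model\<close>

definition lognormal_conv :: "real \<Rightarrow> real \<Rightarrow> (real \<Rightarrow> real) \<Rightarrow> real \<Rightarrow> real" where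
  "lognormal_conv \<mu> \<sigma> I t = integral {0..t} (\<lambda>s. lognormal_density \<mu> \<sigma> (t - s) * I s)"

locale lognormal_epidemic =
  fixes M \<beta> \<mu> \<sigma> :: real and I I' :: "real \<Rightarrow> real"
  assumes M_pos: "M > 0" and beta_pos: "\<beta> > 0" and sigma_pos: "\<sigma> > 0"
    and I_0_nonneg: "0 \<le> I 0" and I_0_le_M: "I 0 \<le> M"
    and I_deriv: "\<And>t. t \<ge> 0 \<Longrightarrow> (I has_real_derivative I' t) (at t within {0..})"
    and I'_cont: "continuous_on {0..} I'"
    and I'_eq: "\<And>t. t \<ge> 0 \<Longrightarrow> I' t = \<beta> * (M - I t) * (I t - lognormal_conv \<mu> \<sigma> I t)"
begin

abbreviation g where "g \<equiv> lognormal_density \<mu> \<sigma>"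
abbreviation G where "G \<equiv> lognormal_cdf \<mu> \<sigma>"
abbreviation conv where "conv \<equiv> lognormal_conv \<mu> \<sigma> I"
abbreviation g_max where "g_max \<equiv> g (exp (\<mu> - \<sigma>\<^sup>2))"

lemma g_nonneg: "0 \<le> g t"
  using sigma_pos by (rule lognormal_density_nonneg)

lemma continuous_on_g: "continuous_on A g"
  using sigma_pos by (rule continuous_on_lognormal_density)

lemma I_continuous: "continuous_on {0..} I"
  using I_deriv by (rule DERIV_continuous_on) simp

lemma I_deriv_at: "t > 0 \<Longrightarrow> (I has_real_derivative I' t) (at t)"
  using I_deriv[of t] at_within_interior[of t "{0..}"] by simp

lemma I_le_if_I'_nonneg:
  assumes "0 \<le> x" "x \<le> y" "\<And>z. x < z \<Longrightarrow> z < y \<Longrightarrow> 0 \<le> I' z"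
  shows "I x \<le> I y"
proof (rule DERIV_nonneg_imp_increasing_open[OF \<open>x \<le> y\<close>])
  show "continuous_on {x..y} I"
    using assms by (intro continuous_on_subset[OF I_continuous]) auto
next
  fix z assume "x < z" "z < y"
  then show "\<exists>d. (I has_real_derivative d) (at z) \<and> 0 \<le> d"
    using assms I_deriv_at[of z] by auto
qed

lemma continuous_on_conv_integrand:
  "0 \<le> a \<Longrightarrow> continuous_on {a..b} (\<lambda>s. g (t - s) * I s)"
  using continuous_on_subset[OF I_continuous]
  by (intro continuous_intros continuous_on_compose2[OF continuous_on_g[of UNIV]]) auto

lemma integrable_conv_integrand:
  "0 \<le> a \<Longrightarrow> (\<lambda>s. g (t - s) * I s) integrable_on {a..b}"
  by (intro integrable_continuous_interval continuous_on_conv_integrand)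

lemma integral_flipped_g: "integral {a..t} (\<lambda>s. g (t - s)) = G (t - a)"
  using integral_reflect_shift_real[of a t g] by (simp add: lognormal_cdf_def)

lemma integrable_flipped_g_mult: "(\<lambda>s. g (t - s) * c) integrable_on {a..b}"
  by (intro integrable_continuous_interval continuous_intros
      continuous_on_compose2[OF continuous_on_g[of UNIV]]) auto

lemma conv_abs_le:
  assumes "0 \<le> t" "\<forall>s\<in>{0..t}. \<bar>I s\<bar> \<le> m"
  shows "\<bar>conv t\<bar> \<le> g_max * m * t"
proof -
  have "norm (conv t) \<le> g_max * m * (t - 0)"
    unfolding lognormal_conv_def
  proof (rule integral_bound)
    show "norm (g (t - s) * I s) \<le> g_max * m" if "s \<in> {0..t}" for s
    proof -
      have "g (t - s) * \<bar>I s\<bar> \<le> g_max * m"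
        using assms that g_nonneg[of "t - s"] lognormal_density_le_mode[OF sigma_pos, of \<mu> "t - s"]
        by (intro mult_mono) auto
      then show ?thesis
        using g_nonneg[of "t - s"] by (simp add: abs_mult)
    qed
  qed (use assms continuous_on_conv_integrand in auto)
  then show ?thesis
    by simp
qed

lemma conv_le:
  assumes "0 \<le> t" "mono_on {0..t} I"
  shows "conv t \<le> I t * G t"
proof -
  have "conv t \<le> integral {0..t} (\<lambda>s. g (t - s) * I t)"
    unfolding lognormal_conv_def
  proof (rule integral_le)
    show "g (t - s) * I s \<le> g (t - s) * I t" if "s \<in> {0..t}" for s
      using that assms g_nonneg[of "t - s"] by (auto intro!: mult_left_mono mono_onD[OF assms(2)])
  qed (simp_all add: integrable_conv_integrand integrable_flipped_g_mult)
  also have "\<dots> = I t * G t"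
    by (simp add: integral_flipped_g)
  finally show ?thesis .
qed

lemma conv_ge:
  assumes "0 \<le> t" "mono_on {0..t} I"
  shows "I (t / 2) * G (t / 2) \<le> conv t"
proof -
  have I_nonneg: "0 \<le> I s" if "s \<in> {0..t}" for s
    using I_0_nonneg mono_onD[OF assms(2), of 0 s] that assms(1) by auto
  have "conv t = integral {0..t / 2} (\<lambda>s. g (t - s) * I s) + integral {t / 2..t} (\<lambda>s. g (t - s) * I s)"
    unfolding lognormal_conv_def using assms(1)
    by (intro Henstock_Kurzweil_Integration.integral_combine[symmetric] integrable_conv_integrand) auto
  moreover have "0 \<le> integral {0..t / 2} (\<lambda>s. g (t - s) * I s)"
    using I_nonneg g_nonneg integrable_conv_integrand by (intro integral_nonneg) auto
  moreover have "integral {t / 2..t} (\<lambda>s. g (t - s) * I (t / 2)) \<le> integral {t / 2..t} (\<lambda>s. g (t - s) * I s)"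
  proof (rule integral_le)
    show "g (t - s) * I (t / 2) \<le> g (t - s) * I s" if "s \<in> {t / 2..t}" for s
      using that assms g_nonneg[of "t - s"] by (auto intro!: mult_left_mono mono_onD[OF assms(2)])
  qed (use assms in \<open>simp_all add: integrable_conv_integrand integrable_flipped_g_mult\<close>)
  moreover have "integral {t / 2..t} (\<lambda>s. g (t - s) * I (t / 2)) = I (t / 2) * G (t / 2)"
    by (simp add: integral_flipped_g)
  ultimately show ?thesis
    by linarith
qed

lemma I_bounded: obtains B where "0 \<le> B" "\<forall>s\<in>{0..T}. \<bar>I s\<bar> \<le> B"
proof -
  have "bounded (I ` {0..T})"
    using continuous_on_subset[OF I_continuous]
    by (intro compact_imp_bounded compact_continuous_image) auto
  then show ?thesis
    using that by (metis bounded_pos image_eqI less_imp_le real_norm_def)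
qed

lemma I'_abs_le:
  assumes "0 \<le> t" "\<forall>s\<in>{0..t}. \<bar>I s\<bar> \<le> m"
  shows "\<bar>I' t\<bar> \<le> \<beta> * \<bar>M - I t\<bar> * ((1 + g_max * t) * m)"
proof -
  have "\<bar>I t\<bar> \<le> m"
    using assms by auto
  then have "\<bar>I t - conv t\<bar> \<le> (1 + g_max * t) * m"
    using conv_abs_le[OF assms] by (simp add: algebra_simps)
  then have "\<bar>M - I t\<bar> * \<bar>I t - conv t\<bar> \<le> \<bar>M - I t\<bar> * ((1 + g_max * t) * m)"
    by (intro mult_left_mono) auto
  then show ?thesis
    using I'_eq[OF assms(1)] beta_pos by (simp add: abs_mult)
qed

lemma I_eq_M_after:
  assumes "0 \<le> t\<^sub>0" "I t\<^sub>0 = M" "t\<^sub>0 \<le> t"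
  shows "I t = M"
proof -
  have "I t - M = 0"
  proof (rule deriv_bounded_by_past_imp_eq_0[where f = "\<lambda>t. I t - M" and f' = I', OF _ _ _ \<open>t\<^sub>0 \<le> t\<close>])
    show "((\<lambda>t. I t - M) has_real_derivative I' x) (at x within {t\<^sub>0..})" if "t\<^sub>0 \<le> x" for x
      using I_deriv[of x] that assms(1)
      by (auto intro!: derivative_eq_intros intro: has_field_derivative_subset)
    show "\<exists>C\<ge>0. \<forall>x m. x \<in> {t\<^sub>0..T} \<longrightarrow> (\<forall>s\<in>{t\<^sub>0..x}. \<bar>I s - M\<bar> \<le> m) \<longrightarrow> \<bar>I' x\<bar> \<le> C * m" for T
    proof -
      obtain B where B: "0 \<le> B" "\<forall>s\<in>{0..T}. \<bar>I s\<bar> \<le> B"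
        by (rule I_bounded)
      have "\<bar>I' x\<bar> \<le> \<beta> * ((1 + g_max * T) * B) * m"
        if x: "x \<in> {t\<^sub>0..T}" and m: "\<forall>s\<in>{t\<^sub>0..x}. \<bar>I s - M\<bar> \<le> m" for x m
      proof -
        have "0 \<le> m" "\<bar>M - I x\<bar> \<le> m"
          using x m abs_ge_zero[of "I x - M"] by (auto simp: abs_minus_commute simp del: abs_ge_zero)
        moreover have "g_max * x \<le> g_max * T"
          using x g_nonneg by (intro mult_left_mono) auto
        ultimately have "\<beta> * \<bar>M - I x\<bar> * ((1 + g_max * x) * B) \<le> \<beta> * m * ((1 + g_max * T) * B)"
          using x B beta_pos g_nonneg[of "exp (\<mu> - \<sigma>\<^sup>2)"] assms(1)
          by (intro mult_mono mult_left_mono) auto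
        moreover have "\<bar>I' x\<bar> \<le> \<beta> * \<bar>M - I x\<bar> * ((1 + g_max * x) * B)"
          using x B assms(1) by (intro I'_abs_le) auto
        ultimately show ?thesis
          by (simp add: algebra_simps)
      qed
      moreover have "0 \<le> \<beta> * ((1 + g_max * T) * B)" if "t\<^sub>0 \<le> T"
        using that assms(1) B beta_pos g_nonneg[of "exp (\<mu> - \<sigma>\<^sup>2)"] by simp
      ultimately show ?thesis
        by (cases "t\<^sub>0 \<le> T") auto
    qed
  qed (use assms in simp)
  then show ?thesis
    by simp
qed

lemma I_eq_0:
  assumes "I 0 = 0" "0 \<le> t"
  shows "I t = 0"
proof (rule deriv_bounded_by_past_imp_eq_0[where f = I and f' = I' and a = 0, OF _ assms(1) _ assms(2)])
  show "(I has_real_derivative I' x) (at x within {0..})" if "0 \<le> x" for x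
    using that by (rule I_deriv)
  show "\<exists>C\<ge>0. \<forall>x m. x \<in> {0..T} \<longrightarrow> (\<forall>s\<in>{0..x}. \<bar>I s\<bar> \<le> m) \<longrightarrow> \<bar>I' x\<bar> \<le> C * m" for T
  proof -
    obtain B where B: "0 \<le> B" "\<forall>s\<in>{0..T}. \<bar>I s\<bar> \<le> B"
      by (rule I_bounded)
    have "\<bar>I' x\<bar> \<le> \<beta> * (M + B) * (1 + g_max * T) * m"
      if x: "x \<in> {0..T}" and m: "\<forall>s\<in>{0..x}. \<bar>I s\<bar> \<le> m" for x m
    proof -
      have "\<bar>I x\<bar> \<le> m" "\<bar>I x\<bar> \<le> B"
        using x m B by auto
      then have "0 \<le> m" "\<bar>M - I x\<bar> \<le> M + B"
        using M_pos by (auto simp: abs_le_iff)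
      moreover have "g_max * x \<le> g_max * T"
        using x g_nonneg by (intro mult_left_mono) auto
      ultimately have "\<beta> * \<bar>M - I x\<bar> * ((1 + g_max * x) * m) \<le> \<beta> * (M + B) * ((1 + g_max * T) * m)"
        using x beta_pos g_nonneg[of "exp (\<mu> - \<sigma>\<^sup>2)"]
        by (intro mult_mono mult_left_mono) auto
      moreover have "\<bar>I' x\<bar> \<le> \<beta> * \<bar>M - I x\<bar> * ((1 + g_max * x) * m)"
        using x m by (intro I'_abs_le) auto
      ultimately show ?thesis
        by (simp add: algebra_simps)
    qed
    moreover have "0 \<le> \<beta> * (M + B) * (1 + g_max * T)" if "0 \<le> T"
      using that B beta_pos M_pos g_nonneg[of "exp (\<mu> - \<sigma>\<^sup>2)"] by simp
    ultimately show ?thesis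
      by (cases "0 \<le> T") auto
  qed
qed

lemma I_le_M:
  assumes "0 \<le> t"
  shows "I t \<le> M"
proof (rule ccontr)
  assume "\<not> I t \<le> M"
  moreover have "continuous_on {0..t} I"
    by (rule continuous_on_subset[OF I_continuous]) auto
  then obtain t\<^sub>0 where "0 \<le> t\<^sub>0" "t\<^sub>0 \<le> t" "I t\<^sub>0 = M"
    using IVT'[of I 0 M t] I_0_le_M \<open>\<not> I t \<le> M\<close> assms by auto
  ultimately show False
    using I_eq_M_after[of t\<^sub>0 t] by simp
qed

lemma conv_less_I:
  assumes "0 < I 0" "0 \<le> t" "mono_on {0..t} I"
  shows "conv t < I t"
proof -
  have "0 < I t"
    using assms mono_onD[OF assms(3), of 0 t] by simp
  then have "I t * G t < I t"
    using lognormal_cdf_less_1[OF sigma_pos] by simp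
  then show ?thesis
    using conv_le[OF assms(2,3)] by simp
qed

lemma I'_nonneg_if_I_0_pos:
  assumes "0 < I 0" "0 \<le> t"
  shows "0 \<le> I' t"
proof (rule ccontr)
  assume "\<not> 0 \<le> I' t"
  define S where "S = {s. 0 \<le> s \<and> I' s < 0}"
  define \<tau> where "\<tau> = Inf S"
  have "t \<in> S"
    using assms \<open>\<not> 0 \<le> I' t\<close> by (simp add: S_def)
  have bdd: "bdd_below S"
    by (auto simp: S_def intro: bdd_belowI[of _ 0])
  have "S \<noteq> {}"
    using \<open>t \<in> S\<close> by blast
  then have \<tau>: "0 \<le> \<tau>" "\<tau> \<le> t"
    unfolding \<tau>_def using cInf_lower[OF \<open>t \<in> S\<close> bdd] by (auto intro: cInf_greatest simp: S_def)
  have "mono_on {0..\<tau>} I"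
  proof (rule mono_onI)
    fix x y assume "x \<in> {0..\<tau>}" "y \<in> {0..\<tau>}" "x \<le> y"
    moreover have "0 \<le> I' z" if "0 \<le> z" "z < \<tau>" for z
      using that cInf_lower[OF _ bdd, of z] by (force simp: \<tau>_def S_def)
    ultimately show "I x \<le> I y"
      by (intro I_le_if_I'_nonneg) auto
  qed
  then have "conv \<tau> < I \<tau>"
    using assms(1) \<tau> by (intro conv_less_I)
  have "closure S \<subseteq> {0..}"
    by (intro closure_minimal) (auto simp: S_def)
  then have "continuous_on (closure S) I'"
    by (rule continuous_on_subset[OF I'_cont])
  moreover have "\<tau> \<in> closure S"
    unfolding \<tau>_def using \<open>S \<noteq> {}\<close> bdd by (rule closure_contains_Inf)
  ultimately have "I' \<tau> \<le> 0"
    by (rule continuous_le_on_closure) (simp add: S_def)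
  then have "M - I \<tau> \<le> 0"
    using I'_eq[OF \<tau>(1)] beta_pos \<open>conv \<tau> < I \<tau>\<close> by (simp add: mult_le_0_iff)
  then have "I \<tau> = M"
    using I_le_M[OF \<tau>(1)] by simp
  then have "I t = M"
    using I_eq_M_after[of \<tau> t] \<tau> by simp
  then show False
    using I'_eq[OF assms(2)] \<open>t \<in> S\<close> by (simp add: S_def)
qed

lemma I'_nonneg:
  assumes "0 \<le> t"
  shows "0 \<le> I' t"
proof (cases "I 0 = 0")
  case True
  have "conv t = integral {0..t} (\<lambda>_. 0)"
    unfolding lognormal_conv_def using I_eq_0[OF True] by (intro integral_cong) auto
  then have "conv t = 0"
    by simp
  then show ?thesis
    using I'_eq[OF assms] I_eq_0[OF True assms] by simp
next
  case False
  then show ?thesis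
    using I_0_nonneg assms by (intro I'_nonneg_if_I_0_pos) auto
qed

lemma I_mono: "mono_on {0..} I"
  by (rule mono_onI) (auto intro!: I_le_if_I'_nonneg I'_nonneg)

lemma I_tendsto: "(I \<longlongrightarrow> (SUP t\<in>{0..}. I t)) at_top"
  using I_mono I_le_M by (intro mono_on_tendsto_at_top_SUP bdd_aboveI2[of _ _ M]) auto

lemma G_tendsto: "(G \<longlongrightarrow> (SUP t\<in>{0..}. G t)) at_top"
  using lognormal_cdf_mono[OF sigma_pos] lognormal_cdf_less_1[OF sigma_pos]
  by (intro mono_on_tendsto_at_top_SUP mono_onI bdd_aboveI2[of _ _ 1]) (auto intro: less_imp_le)

lemma conv_tendsto: "(conv \<longlongrightarrow> (SUP t\<in>{0..}. I t) * (SUP t\<in>{0..}. G t)) at_top"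
proof (rule tendsto_sandwich)
  have I_mono_upto: "mono_on {0..t} I" for t
    using I_mono by (rule mono_on_subset) auto
  show "\<forall>\<^sub>F t in at_top. I (t / 2) * G (t / 2) \<le> conv t"
    using eventually_ge_at_top[of 0] by eventually_elim (intro conv_ge I_mono_upto)
  show "\<forall>\<^sub>F t in at_top. conv t \<le> I t * G t"
    using eventually_ge_at_top[of 0] by eventually_elim (intro conv_le I_mono_upto)
  have "filterlim (\<lambda>t::real. t / 2) at_top at_top"
    by real_asymp
  then show "((\<lambda>t. I (t / 2) * G (t / 2)) \<longlongrightarrow> (SUP t\<in>{0..}. I t) * (SUP t\<in>{0..}. G t)) at_top"
    by (intro tendsto_mult filterlim_compose[OF I_tendsto] filterlim_compose[OF G_tendsto])
  show "((\<lambda>t. I t * G t) \<longlongrightarrow> (SUP t\<in>{0..}. I t) * (SUP t\<in>{0..}. G t)) at_top"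
    by (intro tendsto_mult I_tendsto G_tendsto)
qed

lemma I'_tendsto_0: "(I' \<longlongrightarrow> 0) at_top"
proof -
  let ?L = "SUP t\<in>{0..}. I t" and ?c = "SUP t\<in>{0..}. G t"
  have "\<forall>\<^sub>F t in at_top. \<beta> * (M - I t) * (I t - conv t) = I' t"
    using eventually_ge_at_top[of 0] by eventually_elim (simp add: I'_eq)
  moreover have "((\<lambda>t. \<beta> * (M - I t) * (I t - conv t)) \<longlongrightarrow> \<beta> * (M - ?L) * (?L - ?L * ?c)) at_top"
    by (intro tendsto_intros I_tendsto conv_tendsto)
  ultimately have I': "(I' \<longlongrightarrow> \<beta> * (M - ?L) * (?L - ?L * ?c)) at_top"
    by (rule tendsto_cong[THEN iffD1])
  have "\<forall>\<^sub>F t in at_top. (I has_real_derivative I' t) (at t)"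
    using eventually_gt_at_top[of 0] by eventually_elim (rule I_deriv_at)
  then have "\<beta> * (M - ?L) * (?L - ?L * ?c) = 0"
    using I' I_tendsto by (rule tendsto_deriv_at_top_eq_0)
  with I' show ?thesis
    by metis
qed

end

theorem proposition3p8:
  fixes M \<beta> \<mu> \<sigma> I0 :: real and I I' :: "real \<Rightarrow> real"
  assumes "M > 0" and "\<beta> > 0" and "\<sigma> > 0"
    and "0 \<le> I0" and "I0 \<le> M"
    and "I 0 = I0"
    and "\<And>t. t \<ge> 0 \<Longrightarrow> (I has_real_derivative I' t) (at t within {0..})"
    and "continuous_on {0..} I'"
    and "\<And>t. t \<ge> 0 \<Longrightarrow>
           I' t = \<beta> * (M - I t) *
                  (I t - integral {0..t} (\<lambda>s. lognormal_density \<mu> \<sigma> (t - s) * I s))"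
  shows "(I' \<longlongrightarrow> 0) at_top"
proof -
  interpret lognormal_epidemic M \<beta> \<mu> \<sigma> I I'
    using assms by unfold_locales (auto simp: lognormal_conv_def)
  show ?thesis
    by (rule I'_tendsto_0)
qed

end
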